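(* Let $X\subseteq\Omega$ be club in $\Omega$ with $0\notin X$, and let $\xi\in\hat\varepsilon_{\Omega+1}$. Then $\Theta_X(\xi)\notin X'$ if and only if $\xi<\Omega$ and $\xi\in\mathrm{JUMP}(X)$.
   Context: $\Omega$ is the first uncountable ordinal; $\varepsilon_{\Omega+1}$ the least $\varepsilon>\Omega$ with $\omega^\varepsilon=\varepsilon$. Every $0<\xi<\varepsilon_{\Omega+1}$ has a unique $\Omega$-normal form $\xi=\Omega^{\alpha}\beta+\gamma$ with $0<\beta<\Omega$, $\gamma<\Omega^{\alpha}$. $C(0)=\{0\}$, $C(\Omega^\alpha\beta+\gamma)=C(\alpha)\cup C(\gamma)\cup\{\beta\}$; $\xi^*=\max C(\xi)$. For $\theta<\Omega$: $0[\theta]=1[\theta]=0$; $(\Omega^\alpha\beta+\gamma)[\theta]=\Omega^\alpha\beta+\gamma[\theta]$ if $\gamma>0$; $(\Omega^\alpha\beta)[\theta]=\Omega^\alpha\theta$ if $\beta$ is a limit; $\Omega^{\alpha+1}[\theta]=\Omega^\alpha\theta$; $(\Omega^\alpha(\beta+1))[\theta]=\Omega^\alpha\beta+(\Omega^\alpha)[\theta]$ if $\beta>0$; $\Omega^\alpha[\theta]=\Omega^{\alpha[\theta]}$ if $\alpha$ is a limit. $\tau(0)=0$, $\tau(\zeta+1)=1$, $\tau(\Omega^\alpha\beta+\gamma)=\tau(\gamma)$ if $\gamma>0$, $\tau(\Omega^\alpha\beta)=\beta$ if $\beta$ limit, $\tau(\Omega^\alpha(\beta+1))=\tau(\alpha)$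 if $\alpha$ limit, $\tau(\Omega^{\alpha+1}(\beta+1))=\Omega$. $\Theta_X(\xi)$ is the least $\theta\in X$ with $\theta>\xi^*$ such that all $\zeta<\xi$ with $\zeta^*<\theta$ have $\Theta_X(\zeta)<\theta$. $\Omega_0=1$, $\Omega_{n+1}=\Omega^{\Omega_n}$, $\Theta_X(\varepsilon_{\Omega+1})=\sup_n\Theta_X(\Omega_n)$, $\hat\varepsilon_{\Omega+1}=\{\xi<\varepsilon_{\Omega+1}:\xi^*<\Theta_X(\varepsilon_{\Omega+1})\}$; $X'$ is the set of limit points of $X$. $\mathrm{FIX}(X)$ is the set of $\xi<\varepsilon_{\Omega+1}$ with $(\xi[1])^*<\xi^*=\tau(\xi)=\Theta_X(\gamma)$ for some $\gamma>\xi$; $\mathrm{JUMP}(X)=\{0\}\cup\{\text{successor ordinals}\}\cup\mathrm{FIX}(X)$. *)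

theory Defs
  imports Main "HOL-Library.Countable_Set"
begin

text \<open>The countable ordinals (the elements of Omega) are modelled by a type 'c of class
wellorder; the main theorem assumes that 'c is uncountable and that every proper initial
segment of 'c is countable, which characterises the order type omega_1 = Omega.\<close>

definition cz :: "'c::wellorder" where "cz = (LEAST x. True)"
definition csuc :: "'c::wellorder \<Rightarrow> 'c" where "csuc x = (LEAST y. x < y)"
definition c1 :: "'c::wellorder" where "c1 = csuc cz"
definition cpred :: "'c::wellorder \<Rightarrow> 'c" where "cpred b = (THE y. b = csuc y)"
definition climit :: "'c::wellorder \<Rightarrow> bool" where
  "climit b \<longleftrightarrow> b \<noteq> cz \<and> \<not> (\<exists>y. b = csuc y)"
definition csup :: "'c::wellorder set \<Rightarrow> 'c" where
  "csup S = (LEAST y. \<forall>x\<in>S. x \<le> y)"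

definition limpts :: "'c::wellorder set \<Rightarrow> 'c set" where
  "limpts X = {t. cz < t \<and> (\<forall>y<t. \<exists>x\<in>X. y < x \<and> x < t)}"
definition club :: "'c::wellorder set \<Rightarrow> bool" where
  "club X \<longleftrightarrow> (\<forall>y. \<exists>x\<in>X. y < x) \<and> limpts X \<subseteq> X"

text \<open>OP a b g stands for Omega^a * b + g.\<close>
datatype 'c ot = OZ | OP "'c ot" 'c "'c ot"

fun olt :: "'c::wellorder ot \<Rightarrow> 'c ot \<Rightarrow> bool" where
  "olt OZ OZ = False"
| "olt OZ (OP _ _ _) = True"
| "olt (OP _ _ _) OZ = False"
| "olt (OP a b g) (OP a' b' g') = (olt a a' \<or> (a = a' \<and> (b < b' \<or> (b = b' \<and> olt g g'))))"

fun nf :: "'c::wellorder ot \<Rightarrow> bool" where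
  "nf OZ = True"
| "nf (OP a b g) = (nf a \<and> cz < b \<and> nf g \<and> (case g of OZ \<Rightarrow> True | OP a' _ _ \<Rightarrow> olt a' a))"

definition emb :: "'c::wellorder \<Rightarrow> 'c ot" where
  "emb b = (if b = cz then OZ else OP OZ b OZ)"
definition one :: "'c::wellorder ot" where "one = OP OZ c1 OZ"
definition OmegaT :: "'c::wellorder ot" where "OmegaT = OP one c1 OZ"
definition omono :: "'c::wellorder ot \<Rightarrow> 'c \<Rightarrow> 'c ot" where
  "omono a t = (if t = cz then OZ else OP a t OZ)"

fun osuc :: "'c::wellorder ot \<Rightarrow> 'c ot" where
  "osuc OZ = one"
| "osuc (OP a b g) = (if g \<noteq> OZ then OP a b (osuc g)
     else if a = OZ then OP OZ (csuc b) OZ else OP a b one)"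

definition is_succ :: "'c::wellorder ot \<Rightarrow> bool" where
  "is_succ x \<longleftrightarrow> (\<exists>z. nf z \<and> x = osuc z)"
definition opred :: "'c::wellorder ot \<Rightarrow> 'c ot" where
  "opred x = (THE z. nf z \<and> x = osuc z)"
definition olimit :: "'c::wellorder ot \<Rightarrow> bool" where
  "olimit x \<longleftrightarrow> x \<noteq> OZ \<and> \<not> is_succ x"

fun Cset :: "'c::wellorder ot \<Rightarrow> 'c set" where
  "Cset OZ = {cz}"
| "Cset (OP a b g) = Cset a \<union> Cset g \<union> {b}"
definition star :: "'c::wellorder ot \<Rightarrow> 'c" where "star x = Max (Cset x)"

text \<open>Fundamental sequences xi[t] for t < Omega.  In the branch for g = 0 the value
  (Omega^a)[t] is computed inline: 0 if a = 0, Omega^(a-1) t if a is a successor,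
  Omega^(a[t]) if a is a limit.\<close>
fun fs :: "'c::wellorder ot \<Rightarrow> 'c \<Rightarrow> 'c ot" where
  "fs OZ t = OZ"
| "fs (OP a b g) t =
    (if g \<noteq> OZ then OP a b (fs g t)
     else if climit b then omono a t
     else if b = c1 then
       (if a = OZ then OZ else if is_succ a then omono (opred a) t else OP (fs a t) c1 OZ)
     else OP a (cpred b)
       (if a = OZ then OZ else if is_succ a then omono (opred a) t else OP (fs a t) c1 OZ))"

fun tau :: "'c::wellorder ot \<Rightarrow> 'c ot" where
  "tau OZ = OZ"
| "tau (OP a b g) =
    (if is_succ (OP a b g) then one
     else if g \<noteq> OZ then tau g
     else if climit b then emb b
     else if olimit a then tau a
     else OmegaT)"

definition ordrel :: "('c::wellorder ot \<times> 'c ot) set" where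
  "ordrel = {(z, x). nf z \<and> nf x \<and> olt z x}"

definition Theta :: "'c::wellorder set \<Rightarrow> 'c ot \<Rightarrow> 'c" where
  "Theta X = wfrec ordrel (\<lambda>f x. LEAST t. t \<in> X \<and> star x < t \<and>
      (\<forall>z. nf z \<and> olt z x \<and> star z < t \<longrightarrow> f z < t))"

fun OmegaN :: "nat \<Rightarrow> 'c::wellorder ot" where
  "OmegaN 0 = one"
| "OmegaN (Suc n) = OP (OmegaN n) c1 OZ"

definition ThetaEps :: "'c::wellorder set \<Rightarrow> 'c" where
  "ThetaEps X = csup (range (\<lambda>n. Theta X (OmegaN n)))"

definition hat_eps :: "'c::wellorder set \<Rightarrow> 'c ot set" where
  "hat_eps X = {x. nf x \<and> star x < ThetaEps X}"

definition FIX :: "'c::wellorder set \<Rightarrow> 'c ot set" where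
  "FIX X = {x. nf x \<and> star (fs x c1) < star x \<and> tau x = emb (star x)
              \<and> (\<exists>g. nf g \<and> olt x g \<and> Theta X g = star x)}"

definition JUMP :: "'c::wellorder set \<Rightarrow> 'c ot set" where
  "JUMP X = {x. nf x \<and> (x = OZ \<or> is_succ x \<or> x \<in> FIX X)}"

end

theory Submission
  imports Defs
begin

(* Theta_X(xi) is the least element of X above xi^* that is closed under Theta_X on the
   arguments below xi with smaller support; such elements exist because X is club and only
   countably many normal forms have support below a given countable ordinal.
   If xi >= Omega, every countable y lies below xi, so Theta_X(y) is an element of X between
   y and Theta_X(xi): the value is a limit point of X.  If xi = b < Omega, the values
   Theta_X(d), d < b, are increasing.  For b = 0 or b a successor, Theta_X(b) is the next
   element of X above b resp. above Theta_X(b - 1), hence isolated.  For a limit b,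
   Theta_X(b) is isolated exactly when Theta_X(d) < b for all d < b; and that happens exactly
   when b = Theta_X(gamma) for some gamma > b (take gamma minimal with gamma^* < b and
   Theta_X(gamma) >= b), which for a limit b is the condition b \<in> FIX(X). *)

lemma not_olt_OZ [simp]: "\<not> olt x OZ"
  by (cases x) auto

lemma cz_le: "cz \<le> (x::'c::wellorder)"
  unfolding cz_def by (rule Least_le) simp

lemma csuc_le: "(x::'c::wellorder) < y \<Longrightarrow> csuc x \<le> y"
  unfolding csuc_def by (rule Least_le)

lemma climit_cz_less: "climit (b::'c::wellorder) \<Longrightarrow> cz < b"
  using cz_le[of b] unfolding climit_def by (auto simp: le_less)

lemma climit_csuc_less: "climit (b::'c::wellorder) \<Longrightarrow> d < b \<Longrightarrow> csuc d < b"
  using csuc_le[of d b] unfolding climit_def by (auto simp: le_less)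

lemma climit_c1_less: "climit (b::'c::wellorder) \<Longrightarrow> c1 < b"
  unfolding c1_def using climit_csuc_less climit_cz_less by blast

lemma finite_Cset: "finite (Cset x)"
  by (induction x) auto

lemma cz_in_Cset: "cz \<in> Cset x"
  by (induction x) auto

lemma le_star: "c \<in> Cset x \<Longrightarrow> c \<le> star x"
  unfolding star_def by (rule Max_ge[OF finite_Cset])

lemma set_ot_subset_Cset: "set_ot x \<subseteq> Cset x"
  by (induction x) auto

lemma star_OZ [simp]: "star OZ = cz"
  by (simp add: star_def)

lemma star_emb [simp]: "star (emb b) = b"
  unfolding emb_def star_def using cz_le[of b] by (auto simp: max_def)

lemma nf_emb [simp]: "nf (emb b)"
  unfolding emb_def using cz_le[of b] by (auto simp: le_less)

lemma emb_cz [simp]: "emb cz = OZ"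
  by (simp add: emb_def)

lemma olt_emb_emb: "d < b \<Longrightarrow> olt (emb d) (emb b)"
  using cz_le[of d] unfolding emb_def by auto

lemma olt_emb_trans: "d < b \<Longrightarrow> olt (emb b) g \<Longrightarrow> olt (emb d) g"
  using cz_le[of d] unfolding emb_def by (cases g) (auto split: if_splits)

lemma olt_emb_cases:
  assumes "nf z" "olt z (emb b)"
  obtains d where "d < b" "z = emb d"
proof (cases z)
  case OZ
  then show ?thesis
    using assms(2) that[of cz] cz_le[of b] by (auto simp: emb_def le_less)
next
  case (OP a' b' g')
  with assms have "a' = OZ" "b' < b" "cz < b'"
    by (auto simp: emb_def split: if_splits)
  moreover from this have "g' = OZ"
    using assms(1) OP by (cases g') auto
  ultimately show ?thesis
    using OP that[of b'] by (simp add: emb_def)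
qed

lemma olt_emb_trichotomy: "nf g \<Longrightarrow> olt g (emb b) \<or> g = emb b \<or> olt (emb b) g"
proof (cases g)
  case OZ
  then show ?thesis by (cases "b = cz") (auto simp: emb_def)
next
  case (OP a' b' g')
  assume "nf g"
  show ?thesis
  proof (cases "a' = OZ")
    case True
    with \<open>nf g\<close> OP have "g' = OZ" by (cases g') auto
    with True OP \<open>nf g\<close> show ?thesis by (cases "b = cz") (auto simp: emb_def neq_iff)
  next
    case False
    then have "olt OZ a'" by (cases a') auto
    with OP show ?thesis by (cases "b = cz") (auto simp: emb_def)
  qed
qed

lemma c1_le_if_cz_less: "cz < b \<Longrightarrow> c1 \<le> b"
  unfolding c1_def by (rule csuc_le)

lemma olt_OmegaT_imp_emb:
  assumes "nf \<xi>" "olt \<xi> OmegaT"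
  obtains b where "\<xi> = emb b"
proof (cases \<xi>)
  case OZ
  then show ?thesis using that[of cz] by simp
next
  case (OP a b g)
  from assms OP have "cz < b" "nf a" by auto
  then have "\<not> b < c1" using c1_le_if_cz_less by (simp add: not_less)
  with assms(2) OP have "olt a one" by (auto simp: OmegaT_def)
  with \<open>nf a\<close> have "a = OZ"
    by (cases a) (auto simp: one_def dest: c1_le_if_cz_less)
  moreover from this have "g = OZ" using assms(1) OP by (cases g) auto
  ultimately show ?thesis using OP \<open>cz < b\<close> that[of b] by (simp add: emb_def)
qed

lemma olt_emb_if_not_olt_OmegaT:
  assumes "nf \<xi>" "\<not> olt \<xi> OmegaT"
  shows "olt (emb y) \<xi>"
proof (cases \<xi>)
  case OZ
  with assms show ?thesis by (simp add: OmegaT_def)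
next
  case (OP a b g)
  show ?thesis
  proof (cases "a = OZ")
    case True
    with assms OP have "g = OZ" by (cases g) auto
    with assms OP True show ?thesis by (simp add: OmegaT_def one_def)
  next
    case False
    then have "olt OZ a" by (cases a) auto
    with OP show ?thesis by (simp add: emb_def)
  qed
qed

lemma Cset_OmegaN: "Cset (OmegaN n) = {cz, c1}"
  by (induction n) (auto simp: one_def)

lemma nf_OmegaN: "(cz::'c::wellorder) < c1 \<Longrightarrow> nf (OmegaN n :: 'c ot)"
  by (induction n) (auto simp: one_def)

lemma star_OmegaN: "(cz::'c::wellorder) < c1 \<Longrightarrow> star (OmegaN n :: 'c ot) = c1"
  unfolding star_def Cset_OmegaN by (auto simp: max_def)

lemma osuc_neq_OZ: "osuc z \<noteq> OZ"
  by (cases z) (auto simp: one_def)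

lemma not_is_succ_emb: "climit b \<Longrightarrow> \<not> is_succ (emb b)"
proof
  assume "climit b" "is_succ (emb b)"
  then obtain z where z: "OP OZ b OZ = osuc z"
    unfolding is_succ_def by (auto simp: emb_def climit_def)
  show False
  proof (cases z)
    case OZ
    with z have "b = csuc cz" by (simp add: one_def c1_def)
    with \<open>climit b\<close> show False unfolding climit_def by blast
  next
    case (OP a b' g)
    with z \<open>climit b\<close> osuc_neq_OZ[of g] show False
      by (auto simp: one_def climit_def split: if_splits)
  qed
qed

lemma is_succ_emb_csuc: "csuc y \<noteq> cz \<Longrightarrow> is_succ (emb (csuc y))"
  unfolding is_succ_def
  using cz_le[of y]
  by (intro exI[of _ "emb y"]) (cases "y = cz"; auto simp: emb_def one_def c1_def le_less)

instance ot :: (countable) countable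
  by countable_datatype

lemma countable_set_ot_subset:
  assumes "countable S"
  shows "countable {z::'a ot. set_ot z \<subseteq> S}"
proof -
  let ?f = "to_nat_on S"
  have "inj_on (map_ot ?f) {z. set_ot z \<subseteq> S}"
  proof (rule inj_onI)
    fix x y assume "x \<in> {z. set_ot z \<subseteq> S}" "y \<in> {z. set_ot z \<subseteq> S}"
      and "map_ot ?f x = map_ot ?f y"
    then show "x = y"
      using inj_on_to_nat_on[OF assms]
      by (auto intro: ot.inj_map_strong dest: inj_onD)
  qed
  then show ?thesis
    by (rule countable_image_inj_on[rotated]) simp
qed

section \<open>Well-foundedness of the order on normal forms\<close>

lemma ordrel_iff: "(z, x) \<in> ordrel \<longleftrightarrow> nf z \<and> nf x \<and> olt z x"
  by (simp add: ordrel_def)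

lemma OZ_in_acc_ordrel: "OZ \<in> Wellfounded.acc ordrel"
  by (rule accI) (simp add: ordrel_iff)

lemma OP_in_acc_ordrel_if_smaller_exponents:
  fixes a :: "'c::wellorder ot"
  assumes smaller: "\<And>a' b' g'. olt a' a \<Longrightarrow> nf (OP a' b' g') \<Longrightarrow>
      OP a' b' g' \<in> Wellfounded.acc ordrel"
    and "nf (OP a b g)"
  shows "OP a b g \<in> Wellfounded.acc ordrel"
  using assms(2)
proof (induction b arbitrary: g rule: less_induct)
  case (less b)
  have "g \<in> Wellfounded.acc ordrel"
  proof (cases g)
    case OZ
    then show ?thesis by (simp add: OZ_in_acc_ordrel)
  next
    case (OP a1 b1 g1)
    with less.prems have "olt a1 a" "nf (OP a1 b1 g1)" by auto
    with OP show ?thesis by (simp add: smaller)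
  qed
  then show ?case
    using less.prems
  proof (induction g rule: acc.induct)
    case (accI g)
    show ?case
    proof (rule Wellfounded.accI)
      fix y assume "(y, OP a b g) \<in> ordrel"
      then have "nf y" "olt y (OP a b g)" by (auto simp: ordrel_iff)
      show "y \<in> Wellfounded.acc ordrel"
      proof (cases y)
        case OZ
        then show ?thesis by (simp add: OZ_in_acc_ordrel)
      next
        case (OP a' b' g')
        with \<open>olt y (OP a b g)\<close>
        consider "olt a' a" | "a' = a" "b' < b" | "a' = a" "b' = b" "olt g' g"
          by auto
        then show ?thesis
        proof cases
          case 1
          with OP \<open>nf y\<close> show ?thesis by (simp add: smaller)
        next
          case 2
          with OP \<open>nf y\<close> show ?thesis by (simp add: less.IH)
        next
          case 3
          with OP \<open>nf y\<close> accI.prems have "(g', g) \<in> ordrel" by (simp add: ordrel_iff)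
          with OP \<open>nf y\<close> 3 show ?thesis by (simp add: accI.IH)
        qed
      qed
    qed
  qed
qed

lemma OP_in_acc_ordrel:
  assumes "a \<in> Wellfounded.acc ordrel" "nf (OP a b g)"
  shows "OP a b g \<in> Wellfounded.acc ordrel"
  using assms
proof (induction a arbitrary: b g rule: acc.induct)
  case (accI a)
  show ?case
  proof (rule OP_in_acc_ordrel_if_smaller_exponents[OF _ accI.prems])
    fix a' b' g' assume "olt a' a" "nf (OP a' b' g')"
    with accI.prems have "(a', a) \<in> ordrel" by (simp add: ordrel_iff)
    then show "OP a' b' g' \<in> Wellfounded.acc ordrel"
      using \<open>nf (OP a' b' g')\<close> by (rule accI.IH)
  qed
qed

lemma nf_in_acc_ordrel: "nf x \<Longrightarrow> x \<in> Wellfounded.acc ordrel"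
proof (induction x)
  case OZ
  show ?case by (rule OZ_in_acc_ordrel)
next
  case (OP a b g)
  then show ?case by (simp add: OP_in_acc_ordrel)
qed

lemma wf_ordrel: "wf (ordrel :: ('c::wellorder ot \<times> 'c ot) set)"
proof (rule acc_wfI, intro allI)
  fix x :: "'c ot"
  show "x \<in> Wellfounded.acc ordrel"
  proof (cases "nf x")
    case False
    show ?thesis
    proof (rule accI)
      fix y assume "(y, x) \<in> ordrel"
      with False show "y \<in> Wellfounded.acc ordrel" by (simp add: ordrel_iff)
    qed
  qed (rule nf_in_acc_ordrel)
qed

lemma Theta_eq:
  assumes "nf \<xi>"
  shows "Theta X \<xi> = (LEAST t. t \<in> X \<and> star \<xi> < t \<and>
      (\<forall>z. nf z \<and> olt z \<xi> \<and> star z < t \<longrightarrow> Theta X z < t))"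
  unfolding Theta_def
  by (subst wfrec[OF wf_ordrel])
    (use assms in \<open>auto simp: cut_def ordrel_iff intro!: arg_cong[where f = Least]\<close>)

section \<open>Clubs in an uncountable well-order with countable initial segments\<close>

lemma isolated_point_max_below:
  assumes closed: "limpts X \<subseteq> X" and "t \<notin> limpts X" "x \<in> X" "x < t"
  obtains p where "p \<in> X" "x \<le> p" "p < t" "\<And>x'. x' \<in> X \<Longrightarrow> x' < t \<Longrightarrow> x' \<le> p"
proof -
  define gap where "gap w \<longleftrightarrow> w < t \<and> (\<forall>x'\<in>X. w < x' \<longrightarrow> \<not> x' < t)" for w
  have "cz < t" using cz_le[of x] \<open>x < t\<close> by (rule le_less_trans)
  with \<open>t \<notin> limpts X\<close> obtain w where "gap w" unfolding limpts_def gap_def by auto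
  define p where "p = (LEAST w. gap w)"
  have "gap p" unfolding p_def using \<open>gap w\<close> by (rule LeastI)
  then have below_p: "x' \<le> p" if "x' \<in> X" "x' < t" for x'
    using that unfolding gap_def by (auto simp: not_less)
  have "p \<in> X"
  proof (rule ccontr)
    assume "p \<notin> X"
    have "p \<in> limpts X" unfolding limpts_def
    proof (intro CollectI conjI allI impI)
      show "cz < p"
        using below_p[OF \<open>x \<in> X\<close> \<open>x < t\<close>] \<open>x \<in> X\<close> \<open>p \<notin> X\<close> cz_le[of x]
        by (auto simp: le_less intro: le_less_trans)
      fix v assume "v < p"
      then have "\<not> gap v" unfolding p_def by (rule not_less_Least)
      moreover have "v < t" using \<open>v < p\<close> \<open>gap p\<close> unfolding gap_def by auto
      ultimately obtain x' where "x' \<in> X" "v < x'" "x' < t" unfolding gap_def by auto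
      with below_p \<open>p \<notin> X\<close> show "\<exists>x'\<in>X. v < x' \<and> x' < p" by (force simp: le_less)
    qed
    with closed \<open>p \<notin> X\<close> show False by blast
  qed
  with below_p \<open>x \<in> X\<close> \<open>x < t\<close> \<open>gap p\<close> show ?thesis
    using that unfolding gap_def by blast
qed

locale omega1 =
  assumes uncountable: "\<not> countable (UNIV :: 'c::wellorder set)"
    and countable_segments: "\<forall>x::'c. countable {y. y < x}"
begin

lemma countable_atMost: "countable {..x::'c}"
proof -
  have "{..x} = insert x {y. y < x}" by (auto simp: le_less)
  then show ?thesis using countable_segments by simp
qed

lemma countable_bounded:
  assumes "countable (S::'c set)"
  shows "\<exists>u. \<forall>x\<in>S. x < u"
proof (rule ccontr)
  assume "\<not> ?thesis"
  then have "UNIV = (\<Union>x\<in>S. {..x})" by (auto simp: not_less)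
  moreover have "countable (\<Union>x\<in>S. {..x})"
    using assms countable_atMost by (rule countable_UN)
  ultimately show False using uncountable by simp
qed

lemma less_csuc: "(x::'c) < csuc x"
proof -
  obtain u where "x < u" using countable_bounded[of "{x}"] by auto
  then show ?thesis unfolding csuc_def by (rule LeastI)
qed

lemma cz_less_c1: "(cz::'c) < c1"
  unfolding c1_def by (rule less_csuc)

lemma countable_star_le: "countable {z::'c ot. star z \<le> r}"
proof -
  have "set_ot z \<subseteq> {..r}" if "star z \<le> r" for z :: "'c ot"
    using set_ot_subset_Cset[of z] le_star[of _ z] that by (auto intro: order_trans)
  then have "{z. star z \<le> r} \<subseteq> {z. set_ot z \<subseteq> {..r}}" by blast
  moreover have "countable {z. set_ot z \<subseteq> {..r}}"
    using countable_atMost by (rule countable_set_ot_subset)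
  ultimately show ?thesis by (rule countable_subset)
qed

end

locale omega1_club = omega1 +
  fixes X :: "'c::wellorder set"
  assumes club: "club X"
begin

lemma unbounded: "\<exists>x\<in>X. y < x"
  using club unfolding club_def by auto

lemma closed: "limpts X \<subseteq> X"
  using club unfolding club_def by auto

lemma sup_of_increasing_sequence:
  assumes "\<And>n. sq n \<in> X" "\<And>n. sq n < sq (Suc n)"
  obtains t where "t \<in> X" "\<And>n. sq n < t" "\<And>y. y < t \<Longrightarrow> \<exists>n. y < sq n"
proof -
  obtain u where "\<forall>n. sq n < u" using countable_bounded[of "range sq"] by auto
  define t where "t = (LEAST u. \<forall>n. sq n < u)"
  have above: "sq n < t" for n
    unfolding t_def using \<open>\<forall>n. sq n < u\<close> by (rule LeastI2) simp
  have cofinal: "\<exists>n. y < sq n" if "y < t" for y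
  proof -
    have "\<not> (\<forall>n. sq n < y)" using that unfolding t_def by (rule not_less_Least)
    then obtain n where "y \<le> sq n" by (auto simp: not_less)
    then show ?thesis using assms(2) by (blast intro: le_less_trans)
  qed
  have "t \<in> limpts X" unfolding limpts_def
  proof (intro CollectI conjI allI impI)
    show "cz < t" using cz_le above by (rule le_less_trans)
    fix y assume "y < t"
    then show "\<exists>x\<in>X. y < x \<and> x < t" using cofinal above assms(1) by blast
  qed
  with closed above cofinal that show ?thesis by blast
qed

text \<open>The usual closing-off argument: iterate "go above everything produced so far and
  into X" omega times and take the supremum.\<close>

lemma closure_point:
  assumes "\<And>r. countable (F r)"
  shows "\<exists>t\<in>X. s < t \<and> (\<forall>r<t. \<forall>x\<in>F r. x < t)"
proof -
  have "\<exists>x. x \<in> X \<and> r < x \<and> (\<forall>r'\<le>r. \<forall>y\<in>F r'. y < x)" for r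
  proof -
    have "countable (insert r (\<Union>r'\<in>{..r}. F r'))"
      using assms countable_atMost by auto
    then obtain u where u: "\<forall>y\<in>insert r (\<Union>r'\<in>{..r}. F r'). y < u"
      using countable_bounded by blast
    obtain x where "x \<in> X" "u < x" using unbounded by blast
    moreover from this u have "r < x" "\<forall>r'\<le>r. \<forall>y\<in>F r'. y < x"
      by (auto intro: less_trans)
    ultimately show ?thesis by blast
  qed
  then have "\<exists>g. \<forall>r. g r \<in> X \<and> r < g r \<and> (\<forall>r'\<le>r. \<forall>y\<in>F r'. y < g r)"
    by (intro choice) blast
  then obtain g where g: "\<And>r. g r \<in> X" "\<And>r. r < g r"
    "\<And>r r' y. r' \<le> r \<Longrightarrow> y \<in> F r' \<Longrightarrow> y < g r"
    by blast
  define sq where "sq n = (g ^^ Suc n) s" for n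
  have sq_Suc: "sq (Suc n) = g (sq n)" for n by (simp add: sq_def)
  have "sq n \<in> X" "sq n < sq (Suc n)" for n
    by (simp_all add: sq_def g(1,2))
  then obtain t where t: "t \<in> X" "\<And>n. sq n < t" "\<And>y. y < t \<Longrightarrow> \<exists>n. y < sq n"
    using sup_of_increasing_sequence by blast
  show ?thesis
  proof (intro bexI conjI allI impI ballI)
    show "s < t" using g(2)[of s] t(2)[of 0] by (simp add: sq_def)
    fix r x assume "r < t" "x \<in> F r"
    then obtain n where "r < sq n" using t(3) by blast
    then have "x < sq (Suc n)"
      using g(3)[OF less_imp_le \<open>x \<in> F r\<close>] by (simp add: sq_Suc)
    then show "x < t" using t(2) by (rule less_trans)
  qed (rule \<open>t \<in> X\<close>)
qed

lemma Theta_spec: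
  assumes "nf \<xi>"
  shows "Theta X \<xi> \<in> X \<and> star \<xi> < Theta X \<xi> \<and>
    (\<forall>z. nf z \<and> olt z \<xi> \<and> star z < Theta X \<xi> \<longrightarrow> Theta X z < Theta X \<xi>)"
proof -
  have "countable (Theta X ` {z. star z \<le> r})" for r
    using countable_star_le by simp
  then obtain t where "t \<in> X" "star \<xi> < t"
    and closed_t: "\<forall>r<t. \<forall>x\<in>Theta X ` {z. star z \<le> r}. x < t"
    using closure_point[of "\<lambda>r. Theta X ` {z. star z \<le> r}" "star \<xi>"] by blast
  have "Theta X z < t" if "star z < t" for z
    using closed_t that by simp
  with \<open>t \<in> X\<close> \<open>star \<xi> < t\<close>
  have "t \<in> X \<and> star \<xi> < t \<and> (\<forall>z. nf z \<and> olt z \<xi> \<and> star z < t \<longrightarrow> Theta X z < t)"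
    by blast
  then show ?thesis unfolding Theta_eq[OF assms] by (rule LeastI)
qed

lemma Theta_mem: "nf \<xi> \<Longrightarrow> Theta X \<xi> \<in> X"
  using Theta_spec by blast

lemma star_less_Theta: "nf \<xi> \<Longrightarrow> star \<xi> < Theta X \<xi>"
  using Theta_spec by blast

lemma Theta_less_Theta:
  "nf \<xi> \<Longrightarrow> nf z \<Longrightarrow> olt z \<xi> \<Longrightarrow> star z < Theta X \<xi> \<Longrightarrow> Theta X z < Theta X \<xi>"
  using Theta_spec by blast

lemma Theta_le:
  assumes "nf \<xi>" "t \<in> X" "star \<xi> < t"
    "\<And>z. nf z \<Longrightarrow> olt z \<xi> \<Longrightarrow> star z < t \<Longrightarrow> Theta X z < t"
  shows "Theta X \<xi> \<le> t"
  unfolding Theta_eq[OF assms(1)] by (rule Least_le) (use assms in blast)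

lemma less_Theta_emb: "y < Theta X (emb y)"
  using star_less_Theta[of "emb y"] by simp

lemma Theta_emb_strict_mono:
  assumes "d < b"
  shows "Theta X (emb d) < Theta X (emb b)"
proof -
  have "d < Theta X (emb b)" using assms less_Theta_emb by (rule less_trans)
  then show ?thesis using Theta_less_Theta[of "emb b" "emb d"] olt_emb_emb[OF assms] by simp
qed

lemma Theta_emb_mono: "d \<le> b \<Longrightarrow> Theta X (emb d) \<le> Theta X (emb b)"
  using Theta_emb_strict_mono by (auto simp: le_less)

section \<open>When Theta is a limit point of X\<close>

lemma Theta_in_limpts_if_not_olt_OmegaT:
  assumes "nf \<xi>" "\<not> olt \<xi> OmegaT"
  shows "Theta X \<xi> \<in> limpts X"
  unfolding limpts_def
proof (intro CollectI conjI allI impI)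
  show "cz < Theta X \<xi>" using cz_le star_less_Theta[OF assms(1)] by (rule le_less_trans)
  fix y assume "y < Theta X \<xi>"
  then have "Theta X (emb y) < Theta X \<xi>"
    using Theta_less_Theta[OF assms(1)] olt_emb_if_not_olt_OmegaT[OF assms] by simp
  then show "\<exists>x\<in>X. y < x \<and> x < Theta X \<xi>"
    using Theta_mem[of "emb y"] less_Theta_emb[of y] by auto
qed

text \<open>If every Theta-value below \<open>\<xi>\<close> is at most \<open>s\<close>, then \<open>Theta X \<xi>\<close> is the least element
  of X above \<open>s\<close>.\<close>

lemma Theta_not_in_limpts:
  assumes "nf \<xi>" "star \<xi> \<le> s" "s < Theta X \<xi>"
    and below: "\<And>z. nf z \<Longrightarrow> olt z \<xi> \<Longrightarrow> Theta X z \<le> s"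
  shows "Theta X \<xi> \<notin> limpts X"
proof
  assume "Theta X \<xi> \<in> limpts X"
  with \<open>s < Theta X \<xi>\<close> obtain x where x: "x \<in> X" "s < x" "x < Theta X \<xi>"
    unfolding limpts_def by blast
  have "Theta X \<xi> \<le> x"
    using assms(1) x(1) by (rule Theta_le) (use assms(2) x(2) below in \<open>auto intro: le_less_trans\<close>)
  with x(3) show False by simp
qed

lemma Theta_OZ_not_in_limpts: "Theta X OZ \<notin> limpts X"
  using star_less_Theta[of OZ] by (intro Theta_not_in_limpts[of _ cz]) auto

lemma Theta_emb_csuc_not_in_limpts: "Theta X (emb (csuc y)) \<notin> limpts X"
proof (rule Theta_not_in_limpts)
  show "star (emb (csuc y)) \<le> Theta X (emb y)"
    using csuc_le[OF less_Theta_emb[of y]] by simp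
  show "Theta X (emb y) < Theta X (emb (csuc y))"
    using less_csuc by (rule Theta_emb_strict_mono)
  fix z assume "nf z" "olt z (emb (csuc y))"
  then obtain d where "d < csuc y" "z = emb d" by (rule olt_emb_cases)
  moreover from this have "d \<le> y" using csuc_le[of y d] by (auto simp: not_less[symmetric])
  ultimately show "Theta X z \<le> Theta X (emb y)" using Theta_emb_mono by simp
qed simp

lemma Theta_emb_climit_not_in_limpts_iff:
  assumes "climit b"
  shows "Theta X (emb b) \<notin> limpts X \<longleftrightarrow> (\<forall>d<b. Theta X (emb d) < b)"
proof
  assume small: "\<forall>d<b. Theta X (emb d) < b"
  show "Theta X (emb b) \<notin> limpts X"
  proof (rule Theta_not_in_limpts[of _ b])
    fix z assume "nf z" "olt z (emb b)"
    then obtain d where "d < b" "z = emb d" by (rule olt_emb_cases)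
    with small show "Theta X z \<le> b" by auto
  qed (auto simp: less_Theta_emb)
next
  assume isolated: "Theta X (emb b) \<notin> limpts X"
  show "\<forall>d<b. Theta X (emb d) < b"
  proof (rule ccontr)
    assume "\<not> ?thesis"
    then obtain d0 where "d0 < b" "b \<le> Theta X (emb d0)" by (auto simp: not_less)
    obtain p where p: "p \<in> X" "Theta X (emb d0) \<le> p" "p < Theta X (emb b)"
      and maximal: "\<And>x. x \<in> X \<Longrightarrow> x < Theta X (emb b) \<Longrightarrow> x \<le> p"
      by (rule isolated_point_max_below[OF closed isolated Theta_mem[OF nf_emb] Theta_emb_strict_mono[OF \<open>d0 < b\<close>]])
        blast
    have below_p: "Theta X (emb d) < p" if "d < b" for d
    proof -
      have "csuc d < b" using climit_csuc_less[OF assms that] .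
      then have "Theta X (emb (csuc d)) \<le> p"
        using maximal[OF Theta_mem Theta_emb_strict_mono] by simp
      with Theta_emb_strict_mono[OF less_csuc[of d]] show ?thesis by simp
    qed
    have "Theta X (emb b) \<le> p"
    proof (rule Theta_le)
      show "star (emb b) < p"
        using \<open>b \<le> Theta X (emb d0)\<close> below_p[OF \<open>d0 < b\<close>] by simp
      fix z assume "nf z" "olt z (emb b)"
      then obtain d where "d < b" "z = emb d" by (rule olt_emb_cases)
      with below_p show "Theta X z < p" by simp
    qed (use p in simp_all)
    with p show False by simp
  qed
qed

section \<open>Fixed points\<close>

lemma less_ThetaEps_imp_less_Theta_OmegaN:
  assumes "b < ThetaEps X"
  shows "\<exists>n. b < Theta X (OmegaN n)"
proof (rule ccontr)
  assume "\<nexists>n. b < Theta X (OmegaN n)"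
  then have "\<forall>x\<in>range (\<lambda>n. Theta X (OmegaN n)). x \<le> b" by (auto simp: not_less)
  then have "ThetaEps X \<le> b" unfolding ThetaEps_def csup_def by (rule Least_le)
  with assms show False by simp
qed

text \<open>The witness \<open>\<gamma>\<close> is an \<open>ordrel\<close>-minimal normal form with \<open>\<gamma>\<^sup>* < b \<le> \<Theta>(\<gamma>)\<close>; the set
  of such forms is nonempty because \<open>b < \<Theta>(\<Omega>\<^sub>n)\<close> for some n.\<close>

lemma fixed_point_exists:
  assumes "climit b" and small: "\<forall>d<b. Theta X (emb d) < b" and "b < ThetaEps X"
  shows "\<exists>\<gamma>. nf \<gamma> \<and> olt (emb b) \<gamma> \<and> Theta X \<gamma> = b"
proof -
  have "b \<in> limpts X" unfolding limpts_def
  proof (intro CollectI conjI allI impI)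
    show "cz < b" using \<open>climit b\<close> by (rule climit_cz_less)
    fix y assume "y < b"
    with small less_Theta_emb[of y] Theta_mem[of "emb y"] show "\<exists>x\<in>X. y < x \<and> x < b" by auto
  qed
  with closed have "b \<in> X" by blast
  define G where "G = {\<gamma>. nf \<gamma> \<and> star \<gamma> < b \<and> b \<le> Theta X \<gamma>}"
  obtain n where "b < Theta X (OmegaN n)" using less_ThetaEps_imp_less_Theta_OmegaN \<open>b < ThetaEps X\<close> by blast
  then have "OmegaN n \<in> G" unfolding G_def
    using nf_OmegaN[OF cz_less_c1] star_OmegaN[OF cz_less_c1] climit_c1_less[OF \<open>climit b\<close>] by auto
  then obtain \<gamma> where "\<gamma> \<in> G" and minimal: "\<And>z. (z, \<gamma>) \<in> ordrel \<Longrightarrow> z \<notin> G"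
    using wfE_min[OF wf_ordrel] by metis
  then have \<gamma>: "nf \<gamma>" "star \<gamma> < b" "b \<le> Theta X \<gamma>" unfolding G_def by auto
  have "olt (emb b) \<gamma>"
  proof -
    have "\<not> olt \<gamma> (emb b)"
    proof
      assume "olt \<gamma> (emb b)"
      with \<gamma>(1) obtain d where "d < b" "\<gamma> = emb d" by (rule olt_emb_cases)
      with small \<gamma>(3) show False by auto
    qed
    with olt_emb_trichotomy[OF \<gamma>(1), of b] \<gamma>(2) show ?thesis by auto
  qed
  moreover have "Theta X \<gamma> \<le> b"
  proof (rule Theta_le)
    fix z assume "nf z" "olt z \<gamma>" "star z < b"
    with minimal[of z] \<gamma>(1) show "Theta X z < b" by (auto simp: G_def ordrel_iff not_le)
  qed (use \<gamma> \<open>b \<in> X\<close> in simp_all)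
  ultimately show ?thesis using \<gamma> by auto
qed

lemma Theta_emb_less_fixed_point:
  assumes "nf \<gamma>" "olt (emb b) \<gamma>" "Theta X \<gamma> = b" "d < b"
  shows "Theta X (emb d) < b"
  using Theta_less_Theta[of \<gamma> "emb d"] assms olt_emb_trans[OF \<open>d < b\<close> assms(2)] by simp

lemma emb_climit_in_JUMP_iff:
  assumes "climit b"
  shows "emb b \<in> JUMP X \<longleftrightarrow> (\<exists>\<gamma>. nf \<gamma> \<and> olt (emb b) \<gamma> \<and> Theta X \<gamma> = b)"
proof -
  have emb_b: "emb b = OP OZ b OZ" using assms by (simp add: emb_def climit_def)
  have "(c1::'c) \<noteq> cz" using cz_less_c1 by simp
  have "fs (emb b) c1 = emb c1"
    using assms \<open>c1 \<noteq> cz\<close> by (simp add: emb_b omono_def emb_def climit_def)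
  moreover have "tau (emb b) = emb b"
    using not_is_succ_emb[OF assms] assms by (simp add: emb_b)
  moreover have "emb b \<noteq> OZ" by (simp add: emb_b)
  ultimately show ?thesis
    using not_is_succ_emb[OF assms] climit_c1_less[OF assms]
    by (simp add: JUMP_def FIX_def)
qed

lemma Theta_emb_not_in_limpts_iff:
  assumes "b < ThetaEps X"
  shows "Theta X (emb b) \<notin> limpts X \<longleftrightarrow> emb b \<in> JUMP X"
proof -
  consider "b = cz" | y where "b = csuc y" | "climit b" unfolding climit_def by blast
  then show ?thesis
  proof cases
    case 1
    then show ?thesis using Theta_OZ_not_in_limpts by (simp add: JUMP_def)
  next
    case (2 y)
    have "csuc y \<noteq> cz" using cz_le[of y] less_csuc[of y] by auto
    with 2 show ?thesis
      using is_succ_emb_csuc[OF \<open>csuc y \<noteq> cz\<close>] Theta_emb_csuc_not_in_limpts by (simp add: JUMP_def)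
  next
    case 3
    then show ?thesis
      using Theta_emb_climit_not_in_limpts_iff emb_climit_in_JUMP_iff
        fixed_point_exists[OF _ _ assms] Theta_emb_less_fixed_point
      by blast
  qed
qed

end

theorem proposition4p8:
  fixes X :: "'c::wellorder set" and \<xi> :: "'c ot"
  assumes omega1_uncountable: "\<not> countable (UNIV :: 'c set)"
    and omega1_segments: "\<forall>x::'c. countable {y. y < x}"
    and "club X" and "cz \<notin> X" and "\<xi> \<in> hat_eps X"
  shows "Theta X \<xi> \<notin> limpts X \<longleftrightarrow> (olt \<xi> OmegaT \<and> \<xi> \<in> JUMP X)"
proof -
  interpret omega1_club X
    using assms by unfold_locales
  have "nf \<xi>" "star \<xi> < ThetaEps X" using \<open>\<xi> \<in> hat_eps X\<close> by (auto simp: hat_eps_def)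
  show ?thesis
  proof (cases "olt \<xi> OmegaT")
    case True
    with \<open>nf \<xi>\<close> obtain b where "\<xi> = emb b" by (rule olt_OmegaT_imp_emb)
    with True \<open>star \<xi> < ThetaEps X\<close> show ?thesis using Theta_emb_not_in_limpts_iff by simp
  next
    case False
    with \<open>nf \<xi>\<close> show ?thesis using Theta_in_limpts_if_not_olt_OmegaT by simp
  qed
qed

end
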